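(* Let $\delta,\kappa,a,\alpha>0$ and $\varphi\in(-\pi/2,\pi/2)$; put $d=2\pi\delta$, $\gamma=[-d,d]$, $\Gamma=\kappa\cos\varphi$, $q_0=\dfrac{2\pi\delta\kappa}{\cos\varphi}$. Let $\varepsilon^{(L)}:\gamma\to\mathbb{C}$ be continuous and write $\varepsilon^{(L)}(z)-1=\varepsilon_1(z)\exp[i\varepsilon_2(z)]$ with $\varepsilon_1,\varepsilon_2$ continuous, $\varepsilon_1(z)\ge1$ and $0\le\varepsilon_2(z)<\pi/2$ on $\gamma$; let $E_1=\max_{z\in\gamma}\varepsilon_1(z)=\max_{z\in\gamma}|\varepsilon^{(L)}(z)-1|$. Assume $$0<E_1q_0<1,\qquad \alpha<\alpha_0^{(1)}:=\frac{4}{27}\,\frac{1}{a^2}\,\frac{(1-E_1q_0)^3}{q_0}.$$ Then $P_K^{(1)}(p)=\alpha q_0p^3-(1-E_1q_0)p+a$ has two positive zeros $p_1^{(1)}<p_2^{(1)}$. Let $p\in(p_1^{(1)},p_2^{(1)})$ satisfy $$t_1:=q_0\bigl(E_1+3\alpha p^2\bigr)<1,$$ and assume $0<\alpha<\min\{\alpha_0^{(1)},\alpha_1^{(1)}\}$ with $\alpha_1^{(1)}=\frac13\bigl[q_0(1-E_1q_0)\bigr]^{-1}$. Then the operator $T$ maps $\bar S_p=\{U\in C(\gamma):\|U\|\le p\}$ into itself and $\|T(U)-T(V)\|\le t_1\|U-V\|$ for all $U,V\in\bar S_p$.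
   Context: $C(\gamma)$ is the Banach space of continuous complex-valued functions on $\gamma$ with norm $\|U\|=\max_{z\in\gamma}|U(z)|$. The operator $T:C(\gamma)\to C(\gamma)$ is $$T(U)(z)=a\,e^{-i\Gamma(z-d)}-\frac{i\kappa^2}{2\Gamma}\int_{-d}^{d}e^{i\Gamma|z-z_0|}\Bigl[1-\varepsilon^{(L)}(z_0)-\alpha|U(z_0)|^2\Bigr]U(z_0)\,dz_0,$$ whose fixed points are the solutions of the integral equation $(\ast)$: $U(z)+\frac{i\kappa^2}{2\Gamma}\int_{-d}^{d}e^{i\Gamma|z-z_0|}[1-(\varepsilon^{(L)}(z_0)+\alpha|U(z_0)|^2)]U(z_0)dz_0=a e^{-i\Gamma(z-d)}$, $z\in\gamma$ (here with a complex-valued, i.e. lossy, permittivity $\varepsilon^{(L)}$). *)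

theory Defs
  imports "HOL-Analysis.Analysis"
begin

text \<open>Sup-norm of a function on a set (the norm of C(gamma) when S = gamma is compact
  and U is continuous on S; the supremum is then a maximum).\<close>
definition sup_norm_on :: "real set \<Rightarrow> (real \<Rightarrow> complex) \<Rightarrow> real" where
  "sup_norm_on S U = (SUP z\<in>S. cmod (U z))"

definition opT :: "real \<Rightarrow> real \<Rightarrow> real \<Rightarrow> real \<Rightarrow> real \<Rightarrow> (real \<Rightarrow> complex)
    \<Rightarrow> (real \<Rightarrow> complex) \<Rightarrow> real \<Rightarrow> complex" where
  "opT a \<Gamma> \<kappa> d \<alpha> eps U z =
     complex_of_real a * exp (- \<i> * complex_of_real (\<Gamma> * (z - d)))
     - (\<i> * complex_of_real (\<kappa>\<^sup>2 / (2 * \<Gamma>))) *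
       integral {-d..d} (\<lambda>z0. exp (\<i> * complex_of_real (\<Gamma> * \<bar>z - z0\<bar>))
          * (1 - (eps z0 + complex_of_real (\<alpha> * (cmod (U z0))\<^sup>2))) * U z0)"

end

theory Submission imports Defs begin

(*
  The operator T is a constant incident wave minus an integral of the Kerr-type
  nonlinearity  N(U) = (1 - eps - alpha |U|^2) U  against the unimodular kernel
  exp(i Gamma |z - z0|).  Since |eps - 1| <= E1 on gamma, the integral over gamma of
  length 2d, multiplied by kappa^2/(2 Gamma), contributes at most
  q0 = kappa^2 d / Gamma times the sup-norm bound on N(U).  Hence
    |T U| <= a + q0 (E1 + alpha p^2) p          for ||U|| <= p,
    |T U - T V| <= q0 (E1 + 3 alpha p^2) ||U - V||  for ||U||, ||V|| <= p.
  The first bound is <= p exactly when the cubic P(p) = alpha q0 p^3 - (1 - E1 q0) p + a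
  is non-positive, which holds strictly between its two positive roots.
*)

subsection \<open>The cubic \<open>A p^3 - B p + a\<close>\<close>

lemma cubic_factor:
  fixes A B a p1 p2 p :: real
  assumes "p1 \<noteq> p2" "A * p1^3 - B * p1 + a = 0" "A * p2^3 - B * p2 + a = 0"
  shows "A * p^3 - B * p + a = A * (p - p1) * (p - p2) * (p + p1 + p2)"
proof -
  have "(p2 - p1) * (A * (p1^2 + p1*p2 + p2^2) - B) = 0"
    using assms(2,3) by (simp add: algebra_simps power2_eq_square power3_eq_cube)
  hence B: "B = A * (p1^2 + p1*p2 + p2^2)" using assms(1) by simp
  have a: "a = B * p1 - A * p1^3" using assms(2) by simp
  show ?thesis unfolding a B by (simp add: algebra_simps power2_eq_square power3_eq_cube)
qed

text \<open>If the discriminant condition \<open>27 A a^2 < 4 B^3\<close> holds, the cubic has exactly two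
  positive roots: it is positive at \<open>0\<close> and \<open>2s\<close> and negative at its minimum \<open>s\<close>.\<close>
lemma cubic_two_positive_roots:
  fixes A B a :: real
  assumes A: "A > 0" and B: "B > 0" and a: "a > 0" and disc: "A * a^2 < 4/27 * B^3"
  shows "\<exists>p1 p2. 0 < p1 \<and> p1 < p2
           \<and> A * p1^3 - B * p1 + a = 0 \<and> A * p2^3 - B * p2 + a = 0
           \<and> (\<forall>p>0. A * p^3 - B * p + a = 0 \<longrightarrow> p = p1 \<or> p = p2)"
proof -
  define f where "f = (\<lambda>p::real. A * p^3 - B * p + a)"
  define s where "s = sqrt (B / (3*A))"
  have s0: "s > 0" using A B unfolding s_def by simp
  have As2: "A * s^2 = B/3" using A B unfolding s_def by simp
  have "A * (27 * a^2) < A * (27 * (2 * B * s / 3)^2)"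
  proof -
    have "A * (27 * (2 * B * s / 3)^2) = 4 * B^2 * (3 * (A * s^2))"
      by (simp add: power2_eq_square algebra_simps)
    also have "\<dots> = 4 * B^3" using As2 by (simp add: power2_eq_square power3_eq_cube)
    finally show ?thesis using disc by simp
  qed
  hence "a^2 < (2 * B * s / 3)^2" using A by simp
  hence "a < 2 * B * s / 3" by (rule power_less_imp_less_base) (use B s0 in simp)
  moreover have "f s = a - 2 * B * s / 3" and "f (2 * s) = a + 2 * B * s / 3"
    unfolding f_def using As2 by (simp_all add: power3_eq_cube power2_eq_square algebra_simps)
  ultimately have fs: "f s < 0" and f2s: "f (2 * s) > 0" using B s0 a by auto
  have f0: "f 0 > 0" using a unfolding f_def by simp
  have cont: "\<And>x. isCont f x" unfolding f_def by (intro continuous_intros)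
  obtain p1 where p1: "0 \<le> p1" "p1 \<le> s" "f p1 = 0"
    using IVT2[of f s 0 0] fs f0 s0 cont by auto
  obtain p2 where p2: "s \<le> p2" "p2 \<le> 2 * s" "f p2 = 0"
    using IVT[of f s 0 "2 * s"] fs f2s s0 cont by auto
  have "p1 \<noteq> 0" "p1 \<noteq> s" "p2 \<noteq> s" using p1 p2 f0 fs by auto
  with p1 p2 have ord: "0 < p1" "p1 < p2" by auto
  have roots: "A * p1^3 - B * p1 + a = 0" "A * p2^3 - B * p2 + a = 0"
    using p1 p2 unfolding f_def by auto
  have "p = p1 \<or> p = p2" if "p > 0" "A * p^3 - B * p + a = 0" for p
  proof -
    have "A * (p - p1) * (p - p2) * (p + p1 + p2) = 0"
      using cubic_factor[OF _ roots, of p] ord that by simp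
    thus ?thesis using A ord that by auto
  qed
  thus ?thesis using ord roots by blast
qed

lemma cubic_negative_between_roots:
  fixes A B a p1 p2 p :: real
  assumes "A > 0" "0 < p1" "p1 < p" "p < p2"
    "A * p1^3 - B * p1 + a = 0" "A * p2^3 - B * p2 + a = 0"
  shows "A * p^3 - B * p + a < 0"
proof -
  have "A * (p - p1) > 0" "(p - p2) * (p + p1 + p2) < 0"
    using assms(1-4) by (auto intro: mult_neg_pos)
  hence "A * (p - p1) * ((p - p2) * (p + p1 + p2)) < 0" by (rule mult_pos_neg)
  thus ?thesis using cubic_factor[OF _ assms(5,6), of p] assms(3,4) by (simp add: mult.assoc)
qed

subsection \<open>Pointwise estimates for the Kerr nonlinearity\<close>

definition kerr :: "complex \<Rightarrow> real \<Rightarrow> complex \<Rightarrow> complex" where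
  "kerr e \<alpha> u = (1 - (e + complex_of_real (\<alpha> * (cmod u)\<^sup>2))) * u"

lemma cubic_map_lipschitz:
  fixes u v :: complex and p :: real
  assumes u: "cmod u \<le> p" and v: "cmod v \<le> p"
  shows "cmod (complex_of_real ((cmod u)\<^sup>2) * u - complex_of_real ((cmod v)\<^sup>2) * v)
           \<le> 3 * p^2 * cmod (u - v)"
proof -
  have p0: "0 \<le> p" using u norm_ge_zero order_trans by blast
  have split: "complex_of_real ((cmod u)\<^sup>2) * u - complex_of_real ((cmod v)\<^sup>2) * v
      = complex_of_real ((cmod u)\<^sup>2) * (u - v)
        + complex_of_real ((cmod u - cmod v) * (cmod u + cmod v)) * v"
    by (simp add: algebra_simps power2_eq_square)
  have "(cmod u)\<^sup>2 \<le> p^2" using u by (intro power_mono) auto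
  hence first: "cmod (complex_of_real ((cmod u)\<^sup>2) * (u - v)) \<le> p^2 * cmod (u - v)"
    unfolding norm_mult norm_of_real abs_power2 by (rule mult_right_mono) simp
  have "cmod (complex_of_real ((cmod u - cmod v) * (cmod u + cmod v)) * v)
      = \<bar>cmod u - cmod v\<bar> * (cmod u + cmod v) * cmod v"
    by (simp only: norm_mult norm_of_real abs_mult) simp
  also have "\<dots> \<le> cmod (u - v) * (2 * p) * p"
    using u v p0 by (intro mult_mono norm_triangle_ineq3) auto
  finally have second: "cmod (complex_of_real ((cmod u - cmod v) * (cmod u + cmod v)) * v)
      \<le> 2 * p^2 * cmod (u - v)" by (simp add: power2_eq_square algebra_simps)
  show ?thesis
    unfolding split using norm_triangle_le[OF add_mono[OF first second]]
    by (simp add: algebra_simps)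
qed

lemma kerr_bound:
  assumes u: "cmod u \<le> p" and e: "cmod (e - 1) \<le> E" and \<alpha>: "\<alpha> \<ge> 0"
  shows "cmod (kerr e \<alpha> u) \<le> (E + \<alpha> * p^2) * p"
proof -
  have "cmod (complex_of_real (\<alpha> * (cmod u)\<^sup>2)) = \<alpha> * (cmod u)\<^sup>2"
    using \<alpha> by (simp only: norm_of_real) (simp add: abs_mult)
  also have "\<dots> \<le> \<alpha> * p^2" using u \<alpha> by (intro mult_left_mono power_mono) auto
  finally have "cmod ((e - 1) + complex_of_real (\<alpha> * (cmod u)\<^sup>2)) \<le> E + \<alpha> * p^2"
    using e by (intro norm_triangle_le add_mono)
  moreover have "1 - (e + complex_of_real (\<alpha> * (cmod u)\<^sup>2))
      = - ((e - 1) + complex_of_real (\<alpha> * (cmod u)\<^sup>2))" by simp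
  ultimately have "cmod (1 - (e + complex_of_real (\<alpha> * (cmod u)\<^sup>2))) \<le> E + \<alpha> * p^2"
    by (metis norm_minus_cancel)
  thus ?thesis unfolding kerr_def norm_mult using u
    by (intro mult_mono) (auto intro: order_trans[OF norm_ge_zero])
qed

lemma kerr_lipschitz:
  assumes u: "cmod u \<le> p" and v: "cmod v \<le> p" and e: "cmod (e - 1) \<le> E" and \<alpha>: "\<alpha> \<ge> 0"
  shows "cmod (kerr e \<alpha> u - kerr e \<alpha> v) \<le> (E + 3 * \<alpha> * p^2) * cmod (u - v)"
proof -
  have split: "kerr e \<alpha> u - kerr e \<alpha> v = - ((e - 1) * (u - v))
      - complex_of_real \<alpha> * (complex_of_real ((cmod u)\<^sup>2) * u - complex_of_real ((cmod v)\<^sup>2) * v)"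
    unfolding kerr_def by (simp add: algebra_simps)
  have linear: "cmod (- ((e - 1) * (u - v))) \<le> E * cmod (u - v)"
    using e by (simp add: norm_mult mult_right_mono)
  have cubic: "cmod (complex_of_real \<alpha> * (complex_of_real ((cmod u)\<^sup>2) * u
      - complex_of_real ((cmod v)\<^sup>2) * v)) \<le> \<alpha> * (3 * p^2 * cmod (u - v))"
    using cubic_map_lipschitz[OF u v] \<alpha> by (simp add: norm_mult mult_left_mono)
  show ?thesis
    unfolding split using order_trans[OF norm_triangle_ineq4 add_mono[OF linear cubic]]
    by (simp add: algebra_simps)
qed

text \<open>The kernel \<open>exp(i \<Gamma> |z - z0|)\<close> has modulus one, so integrating against it over
  an interval costs at most the length of the interval.\<close>
lemma kernel_integral_bound:
  fixes h :: "real \<Rightarrow> complex"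
  assumes "l \<le> u" "continuous_on {l..u} h" "\<And>t. t \<in> {l..u} \<Longrightarrow> cmod (h t) \<le> B"
  shows "cmod (integral {l..u} (\<lambda>t. exp (\<i> * complex_of_real (\<Gamma> * \<bar>z - t\<bar>)) * h t))
           \<le> B * (u - l)"
  using assms by (intro integral_bound) (auto intro!: continuous_intros simp: norm_mult)

lemma kernel_integral_continuous:
  fixes h :: "real \<Rightarrow> complex"
  assumes h: "continuous_on {l..u} h"
  shows "continuous_on S (\<lambda>z. integral {l..u} (\<lambda>t. exp (\<i> * complex_of_real (\<Gamma> * \<bar>z - t\<bar>)) * h t))"
proof -
  have "continuous_on (S \<times> {l..u}) (\<lambda>x. h (snd x))"
    by (rule continuous_on_compose2[OF h continuous_on_snd]) auto
  hence "continuous_on (S \<times> cbox l u)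
      (\<lambda>(z, t). exp (\<i> * complex_of_real (\<Gamma> * \<bar>z - t\<bar>)) * h t)"
    by (simp add: case_prod_beta) (intro continuous_intros)
  from integral_continuous_on_param[OF this] show ?thesis by simp
qed

lemma sup_norm_on_le:
  assumes "S \<noteq> {}" "\<And>z. z \<in> S \<Longrightarrow> cmod (W z) \<le> c"
  shows "sup_norm_on S W \<le> c"
  unfolding sup_norm_on_def using assms by (intro cSUP_least) auto

lemma norm_le_sup_norm_on:
  assumes "compact S" "continuous_on S W" "z \<in> S"
  shows "cmod (W z) \<le> sup_norm_on S W"
proof -
  have "compact ((\<lambda>z. cmod (W z)) ` S)"
    by (intro compact_continuous_image continuous_intros assms)
  hence "bdd_above ((\<lambda>z. cmod (W z)) ` S)" by (intro bounded_imp_bdd_above compact_imp_bounded)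
  thus ?thesis unfolding sup_norm_on_def using assms by (intro cSUP_upper) auto
qed

subsection \<open>The operator \<open>T\<close>\<close>

lemma opT_kernel_form:
  "opT a \<Gamma> \<kappa> d \<alpha> eps U z = complex_of_real a * exp (- \<i> * complex_of_real (\<Gamma> * (z - d)))
     - \<i> * complex_of_real (\<kappa>\<^sup>2 / (2 * \<Gamma>)) * integral {-d..d}
         (\<lambda>t. exp (\<i> * complex_of_real (\<Gamma> * \<bar>z - t\<bar>)) * kerr (eps t) \<alpha> (U t))"
  unfolding opT_def kerr_def by (simp add: mult.assoc)

lemma kerr_continuous:
  assumes "continuous_on S eps" "continuous_on S U"
  shows "continuous_on S (\<lambda>t. kerr (eps t) \<alpha> (U t))"
  unfolding kerr_def using assms by (intro continuous_intros)

lemma opT_continuous: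
  assumes "continuous_on {-d..d} eps" "continuous_on {-d..d} U"
  shows "continuous_on S (opT a \<Gamma> \<kappa> d \<alpha> eps U)"
  unfolding opT_kernel_form[abs_def]
  using kernel_integral_continuous[OF kerr_continuous[OF assms]] by (intro continuous_intros)

lemma norm_ii_of_real_mult: "cmod (\<i> * complex_of_real c * w) = \<bar>c\<bar> * cmod w"
  by (simp only: norm_mult norm_ii norm_of_real mult_1_left)

lemma opT_norm_bound:
  assumes "d > 0" "\<Gamma> > 0" "\<alpha> \<ge> 0" "continuous_on {-d..d} eps" "continuous_on {-d..d} U"
    and "\<And>t. t \<in> {-d..d} \<Longrightarrow> cmod (eps t - 1) \<le> E"
    and "\<And>t. t \<in> {-d..d} \<Longrightarrow> cmod (U t) \<le> p"
  shows "cmod (opT a \<Gamma> \<kappa> d \<alpha> eps U z) \<le> \<bar>a\<bar> + \<kappa>\<^sup>2 * d / \<Gamma> * ((E + \<alpha> * p^2) * p)"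
proof -
  let ?I = "integral {-d..d} (\<lambda>t. exp (\<i> * complex_of_real (\<Gamma> * \<bar>z - t\<bar>)) * kerr (eps t) \<alpha> (U t))"
  have I: "cmod ?I \<le> (E + \<alpha> * p^2) * p * (d - - d)"
    using assms by (intro kernel_integral_bound kerr_continuous kerr_bound) auto
  have "cmod (opT a \<Gamma> \<kappa> d \<alpha> eps U z)
      \<le> cmod (complex_of_real a * exp (- \<i> * complex_of_real (\<Gamma> * (z - d))))
        + cmod (\<i> * complex_of_real (\<kappa>\<^sup>2 / (2 * \<Gamma>)) * ?I)"
    unfolding opT_kernel_form by (rule norm_triangle_ineq4)
  also have "\<dots> = \<bar>a\<bar> + \<kappa>\<^sup>2 / (2 * \<Gamma>) * cmod ?I"
    using assms(2) unfolding norm_ii_of_real_mult by (simp add: norm_mult)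
  also have "\<dots> \<le> \<bar>a\<bar> + \<kappa>\<^sup>2 / (2 * \<Gamma>) * ((E + \<alpha> * p^2) * p * (d - - d))"
    using I assms(2) by (intro add_left_mono mult_left_mono) auto
  also have "\<dots> = \<bar>a\<bar> + \<kappa>\<^sup>2 * d / \<Gamma> * ((E + \<alpha> * p^2) * p)"
    using assms(2) by (simp add: field_simps)
  finally show ?thesis .
qed

lemma opT_diff_bound:
  assumes "d > 0" "\<Gamma> > 0" "\<alpha> \<ge> 0" "continuous_on {-d..d} eps"
    and "continuous_on {-d..d} U" "continuous_on {-d..d} V"
    and "\<And>t. t \<in> {-d..d} \<Longrightarrow> cmod (eps t - 1) \<le> E"
    and "\<And>t. t \<in> {-d..d} \<Longrightarrow> cmod (U t) \<le> p" "\<And>t. t \<in> {-d..d} \<Longrightarrow> cmod (V t) \<le> p"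
    and "\<And>t. t \<in> {-d..d} \<Longrightarrow> cmod (U t - V t) \<le> M"
  shows "cmod (opT a \<Gamma> \<kappa> d \<alpha> eps U z - opT a \<Gamma> \<kappa> d \<alpha> eps V z)
           \<le> \<kappa>\<^sup>2 * d / \<Gamma> * (E + 3 * \<alpha> * p^2) * M"
proof -
  define K where "K t = exp (\<i> * complex_of_real (\<Gamma> * \<bar>z - t\<bar>))" for t
  define D where "D t = kerr (eps t) \<alpha> (U t) - kerr (eps t) \<alpha> (V t)" for t
  have cD: "continuous_on {-d..d} D" unfolding D_def using assms by (intro continuous_intros kerr_continuous)
  have "cmod (D t) \<le> (E + 3 * \<alpha> * p^2) * M" if "t \<in> {-d..d}" for t
  proof -
    have "cmod (D t) \<le> (E + 3 * \<alpha> * p^2) * cmod (U t - V t)"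
      unfolding D_def using assms that by (intro kerr_lipschitz) auto
    also have "\<dots> \<le> (E + 3 * \<alpha> * p^2) * M"
      using assms(3) assms(7-10)[OF that] by (intro mult_left_mono add_nonneg_nonneg)
        (auto intro: order_trans[OF norm_ge_zero])
    finally show ?thesis .
  qed
  hence I: "cmod (integral {-d..d} (\<lambda>t. K t * D t)) \<le> (E + 3 * \<alpha> * p^2) * M * (d - - d)"
    unfolding K_def using assms(1) cD by (intro kernel_integral_bound) auto
  have split: "integral {-d..d} (\<lambda>t. K t * D t)
      = integral {-d..d} (\<lambda>t. K t * kerr (eps t) \<alpha> (U t)) - integral {-d..d} (\<lambda>t. K t * kerr (eps t) \<alpha> (V t))"
    unfolding D_def K_def right_diff_distrib using assms(1,4-6)
    by (intro integral_diff integrable_continuous_interval continuous_intros kerr_continuous) auto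
  have "opT a \<Gamma> \<kappa> d \<alpha> eps U z - opT a \<Gamma> \<kappa> d \<alpha> eps V z
      = - (\<i> * complex_of_real (\<kappa>\<^sup>2 / (2 * \<Gamma>)) * integral {-d..d} (\<lambda>t. K t * D t))"
    unfolding opT_kernel_form K_def[symmetric] split by (simp add: algebra_simps)
  hence "cmod (opT a \<Gamma> \<kappa> d \<alpha> eps U z - opT a \<Gamma> \<kappa> d \<alpha> eps V z)
      = \<kappa>\<^sup>2 / (2 * \<Gamma>) * cmod (integral {-d..d} (\<lambda>t. K t * D t))"
    using assms(2) by (simp only: norm_minus_cancel norm_ii_of_real_mult) simp
  also have "\<dots> \<le> \<kappa>\<^sup>2 / (2 * \<Gamma>) * ((E + 3 * \<alpha> * p^2) * M * (d - - d))"
    using I assms(2) by (intro mult_left_mono) auto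
  also have "\<dots> = \<kappa>\<^sup>2 * d / \<Gamma> * (E + 3 * \<alpha> * p^2) * M"
    using assms(2) by (simp add: field_simps)
  finally show ?thesis .
qed

lemma opT_maps_ball:
  assumes "d > 0" "\<Gamma> > 0" "\<alpha> \<ge> 0" "continuous_on {-d..d} eps"
    and "\<And>t. t \<in> {-d..d} \<Longrightarrow> cmod (eps t - 1) \<le> E"
    and U: "continuous_on {-d..d} U" "sup_norm_on {-d..d} U \<le> p"
    and radius: "\<bar>a\<bar> + \<kappa>\<^sup>2 * d / \<Gamma> * ((E + \<alpha> * p^2) * p) \<le> p"
  shows "continuous_on {-d..d} (opT a \<Gamma> \<kappa> d \<alpha> eps U)
         \<and> sup_norm_on {-d..d} (opT a \<Gamma> \<kappa> d \<alpha> eps U) \<le> p"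
proof
  show "continuous_on {-d..d} (opT a \<Gamma> \<kappa> d \<alpha> eps U)" using assms(4) U(1) by (rule opT_continuous)
  have "\<And>t. t \<in> {-d..d} \<Longrightarrow> cmod (U t) \<le> p"
    using norm_le_sup_norm_on[of "{-d..d}" U] U by force
  hence "\<And>z. cmod (opT a \<Gamma> \<kappa> d \<alpha> eps U z) \<le> p"
    using opT_norm_bound[OF assms(1-4) U(1) assms(5)] radius by (meson order_trans)
  thus "sup_norm_on {-d..d} (opT a \<Gamma> \<kappa> d \<alpha> eps U) \<le> p"
    using assms(1) by (intro sup_norm_on_le) auto
qed

lemma opT_lipschitz:
  assumes "d > 0" "\<Gamma> > 0" "\<alpha> \<ge> 0" "continuous_on {-d..d} eps"
    and "\<And>t. t \<in> {-d..d} \<Longrightarrow> cmod (eps t - 1) \<le> E"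
    and U: "continuous_on {-d..d} U" "sup_norm_on {-d..d} U \<le> p"
    and V: "continuous_on {-d..d} V" "sup_norm_on {-d..d} V \<le> p"
  shows "sup_norm_on {-d..d} (\<lambda>z. opT a \<Gamma> \<kappa> d \<alpha> eps U z - opT a \<Gamma> \<kappa> d \<alpha> eps V z)
           \<le> \<kappa>\<^sup>2 * d / \<Gamma> * (E + 3 * \<alpha> * p^2) * sup_norm_on {-d..d} (\<lambda>z. U z - V z)"
proof (rule sup_norm_on_le)
  show "{-d..d} \<noteq> {}" using assms(1) by simp
  have UV: "continuous_on {-d..d} (\<lambda>z. U z - V z)" using U V by (intro continuous_intros)
  fix z
  show "cmod (opT a \<Gamma> \<kappa> d \<alpha> eps U z - opT a \<Gamma> \<kappa> d \<alpha> eps V z)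
      \<le> \<kappa>\<^sup>2 * d / \<Gamma> * (E + 3 * \<alpha> * p^2) * sup_norm_on {-d..d} (\<lambda>z. U z - V z)"
    using norm_le_sup_norm_on[of "{-d..d}" U] norm_le_sup_norm_on[of "{-d..d}" V]
      norm_le_sup_norm_on[OF _ UV] U V
    by (intro opT_diff_bound[OF assms(1-4) U(1) V(1) assms(5)]) force+
qed

theorem theorem3:
  fixes \<delta> \<kappa> a \<alpha> \<phi> d \<Gamma> q0 E1 :: real
    and eps :: "real \<Rightarrow> complex" and \<epsilon>1 \<epsilon>2 :: "real \<Rightarrow> real"
  assumes "\<delta> > 0" "\<kappa> > 0" "a > 0" "\<alpha> > 0"
    and "-(pi/2) < \<phi>" "\<phi> < pi/2"
    and "d = 2 * pi * \<delta>"
    and "\<Gamma> = \<kappa> * cos \<phi>"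
    and "q0 = 2 * pi * \<delta> * \<kappa> / cos \<phi>"
    and "continuous_on {-d..d} eps"
    and "continuous_on {-d..d} \<epsilon>1" "continuous_on {-d..d} \<epsilon>2"
    and "\<And>z. z \<in> {-d..d} \<Longrightarrow> eps z - 1 = complex_of_real (\<epsilon>1 z) * exp (\<i> * complex_of_real (\<epsilon>2 z))"
    and "\<And>z. z \<in> {-d..d} \<Longrightarrow> \<epsilon>1 z \<ge> 1"
    and "\<And>z. z \<in> {-d..d} \<Longrightarrow> 0 \<le> \<epsilon>2 z \<and> \<epsilon>2 z < pi/2"
    and "E1 = (SUP z\<in>{-d..d}. \<epsilon>1 z)"
    and "0 < E1 * q0" "E1 * q0 < 1"
    and "\<alpha> < 4/27 * (1 / a\<^sup>2) * ((1 - E1 * q0)^3 / q0)"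
    and "\<alpha> < 1/3 * inverse (q0 * (1 - E1 * q0))"
  shows "(\<exists>p1 p2. 0 < p1 \<and> p1 < p2
            \<and> \<alpha> * q0 * p1^3 - (1 - E1 * q0) * p1 + a = 0
            \<and> \<alpha> * q0 * p2^3 - (1 - E1 * q0) * p2 + a = 0
            \<and> (\<forall>p>0. \<alpha> * q0 * p^3 - (1 - E1 * q0) * p + a = 0 \<longrightarrow> p = p1 \<or> p = p2))
       \<and> (\<forall>p1 p2 p. 0 < p1 \<and> p1 < p2
            \<and> \<alpha> * q0 * p1^3 - (1 - E1 * q0) * p1 + a = 0
            \<and> \<alpha> * q0 * p2^3 - (1 - E1 * q0) * p2 + a = 0
            \<and> p1 < p \<and> p < p2
            \<and> q0 * (E1 + 3 * \<alpha> * p\<^sup>2) < 1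
          \<longrightarrow> (\<forall>U. continuous_on {-d..d} U \<and> sup_norm_on {-d..d} U \<le> p
                 \<longrightarrow> continuous_on {-d..d} (opT a \<Gamma> \<kappa> d \<alpha> eps U)
                     \<and> sup_norm_on {-d..d} (opT a \<Gamma> \<kappa> d \<alpha> eps U) \<le> p)
            \<and> (\<forall>U V. continuous_on {-d..d} U \<and> sup_norm_on {-d..d} U \<le> p
                 \<and> continuous_on {-d..d} V \<and> sup_norm_on {-d..d} V \<le> p
                 \<longrightarrow> sup_norm_on {-d..d} (\<lambda>z. opT a \<Gamma> \<kappa> d \<alpha> eps U z - opT a \<Gamma> \<kappa> d \<alpha> eps V z)
                     \<le> q0 * (E1 + 3 * \<alpha> * p\<^sup>2) * sup_norm_on {-d..d} (\<lambda>z. U z - V z)))"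
proof -
  let "?roots \<and> (\<forall>p1 p2 p. _ \<longrightarrow> ?invariant_ball p)" = ?thesis
  have cos: "cos \<phi> > 0" using assms(5,6) by (intro cos_gt_zero_pi) auto
  have d_pos: "d > 0" and \<Gamma>_pos: "\<Gamma> > 0" and q0_pos: "q0 > 0" using assms(1,2,7-9) cos by auto
  have q0_eq: "q0 = \<kappa>\<^sup>2 * d / \<Gamma>" using assms(2,7-9) cos by (simp add: field_simps power2_eq_square)
  have eps_dev: "cmod (eps z - 1) \<le> E1" if "z \<in> {-d..d}" for z
  proof -
    have "bdd_above (\<epsilon>1 ` {-d..d})"
      by (intro bounded_imp_bdd_above compact_imp_bounded compact_continuous_image assms(11)) simp
    hence "\<epsilon>1 z \<le> E1" unfolding assms(16) using that by (intro cSUP_upper)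
    thus ?thesis using assms(13,14)[OF that] by (simp add: norm_mult)
  qed
  have "\<alpha> * q0 * a^2 < 4/27 * (1 - E1 * q0)^3"
    using mult_strict_right_mono[OF assms(19), of "q0 * a^2"] q0_pos assms(3) by (simp add: field_simps)
  hence two_roots: ?roots
    using assms(3,4,18) q0_pos by (intro cubic_two_positive_roots) auto
  have radius: "\<bar>a\<bar> + \<kappa>\<^sup>2 * d / \<Gamma> * ((E1 + \<alpha> * p^2) * p) \<le> p"
    if "0 < p1" "p1 < p" "p < p2" "\<alpha> * q0 * p1^3 - (1 - E1 * q0) * p1 + a = 0"
       "\<alpha> * q0 * p2^3 - (1 - E1 * q0) * p2 + a = 0" for p1 p2 p
  proof -
    have "\<alpha> * q0 * p^3 - (1 - E1 * q0) * p + a < 0"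
      using cubic_negative_between_roots[OF _ that] assms(4) q0_pos by simp
    thus ?thesis unfolding q0_eq[symmetric] using assms(3)
      by (simp add: algebra_simps power2_eq_square power3_eq_cube)
  qed
  have invariant_ball: "?invariant_ball p"
    if "\<bar>a\<bar> + \<kappa>\<^sup>2 * d / \<Gamma> * ((E1 + \<alpha> * p^2) * p) \<le> p" for p
    using opT_maps_ball[OF d_pos \<Gamma>_pos _ assms(10) eps_dev _ _ that]
      opT_lipschitz[OF d_pos \<Gamma>_pos _ assms(10) eps_dev] assms(4) unfolding q0_eq by auto
  show ?thesis using two_roots invariant_ball radius by blast
qed

end
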